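(* Let $g$ be a nonnegative even function on $\mathbb{R}$ with $\int_{\mathbb{R}} g(v)\,dv=1$ and $\int_{\mathbb{R}} g(v)v^2\,dv=1$. Suppose that for some $s\in(0,2]$, $K_1>1$, $K_2>0$, $$|\hat g(\xi)|\leq K_1e^{-K_2|\xi|^s}\quad\text{for all }\xi\in\mathbb{R}.$$ Then there exists $\eta>0$ such that for every $R>\eta$ there exists $K>0$ (depending on $R$) with $$|\hat g(\xi)|\leq e^{-K|\xi|^2}\ \text{ for } |\xi|<R,\qquad |\hat g(\xi)|\leq e^{-K|\xi|^s}\ \text{ for } |\xi|\geq R.$$
   Context: $\hat g(\xi)=\int_{\mathbb{R}} g(v)e^{-i\xi v}dv$. *)

theory Defs
  imports "HOL-Analysis.Analysis"
begin

definition fourier :: "(real \<Rightarrow> real) \<Rightarrow> real \<Rightarrow> complex" where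
  "fourier g \<xi> = (LINT v|lborel. complex_of_real (g v) * cis (- \<xi> * v))"

end

(*
  Since g is even, its Fourier transform is the real cosine transform phi, and everything is
  about the gap u = 1 - |phi|.  Near the origin u(xi) >= xi^2/4, because 1 - cos x >= x^2/3
  for |x| <= 1 and the truncated variance of g tends to 1.  The identity
  1 - cos 2x = 2 (1 - cos x)(1 + cos x) integrates to the doubling inequality u(2 xi) <= 4 u(xi).
  For |xi| >= eta the hypothesis gives |phi(xi)| <= exp(-K2 |xi|^s / 2) / 2, in particular
  u >= 1/2 there; halving eta finitely often until it drops below the near-zero range, the
  doubling inequality yields u(xi) >= c xi^2 on every bounded interval, and
  |phi| = 1 - u <= exp(-u).
*)
theory Submission
  imports Defs "HOL-Probability.Characteristic_Functions"
begin

lemma one_minus_cos_le: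
  fixes x :: real
  shows "1 - cos x \<le> x\<^sup>2 / 2"
proof -
  have "\<bar>sin (x / 2)\<bar>\<^sup>2 \<le> \<bar>x / 2\<bar>\<^sup>2"
    by (intro power_mono abs_sin_x_le_abs_x) simp
  moreover have "cos x = 1 - 2 * sin (x / 2) ^ 2"
    using cos_double_sin[of "x / 2"] by simp
  ultimately show ?thesis by (simp add: power_divide)
qed

lemma one_minus_cos_ge:
  fixes x :: real
  assumes "\<bar>x\<bar> \<le> 1"
  shows "x\<^sup>2 / 3 \<le> 1 - cos x"
proof -
  define r where "r = iexp x - (\<Sum>k \<le> 3. (\<i> * x) ^ k / fact k)"
  have "cos x - (1 - x\<^sup>2 / 2) = Re r"
    by (simp add: r_def numeral_3_eq_3 fact_numeral Re_exp power2_eq_square)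
  also have "\<dots> \<le> \<bar>x\<bar> ^ 4 / 24"
    using abs_Re_le_cmod[of r] iexp_approx1[of x 3] by (simp add: r_def fact_numeral)
  also have "\<dots> = x\<^sup>2 * x\<^sup>2 / 24"
    by (simp add: power4_eq_xxxx power2_eq_square abs_mult_self_eq)
  also have "\<dots> \<le> 1 * x\<^sup>2 / 24"
    using assms by (intro divide_right_mono mult_right_mono) (simp_all add: abs_square_le_1)
  finally show ?thesis using zero_le_power2[of x] by linarith
qed

lemma one_minus_cos_double_le:
  fixes \<sigma> x :: real
  assumes "\<bar>\<sigma>\<bar> \<le> 1"
  shows "1 - cos (2 * x) \<le> 4 * (1 - \<sigma> * cos x)"
proof -
  \<comment> \<open>with \<open>c = cos x\<close>, the difference is \<open>2 (c - \<sigma>)\<^sup>2 + 2 (1 - \<sigma>\<^sup>2)\<close>\<close>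
  have "\<sigma>\<^sup>2 \<le> 1" using assms by (simp add: abs_square_le_1)
  moreover have "0 \<le> (cos x - \<sigma>)\<^sup>2" by simp
  ultimately show ?thesis
    unfolding cos_double_cos by (simp add: power2_diff algebra_simps)
qed

lemma integrable_mult_bounded:
  fixes g h :: "'a \<Rightarrow> real"
  assumes g: "integrable M g" and h: "h \<in> borel_measurable M" and bounded: "\<And>x. \<bar>h x\<bar> \<le> B"
  shows "integrable M (\<lambda>x. g x * h x)"
proof (rule Bochner_Integration.integrable_bound)
  show "integrable M (\<lambda>x. B * g x)" using g by simp
  show "(\<lambda>x. g x * h x) \<in> borel_measurable M"
    using borel_measurable_integrable[OF g] h by simp
  show "AE x in M. norm (g x * h x) \<le> norm (B * g x)"
  proof (rule AE_I2)
    fix x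
    have "\<bar>h x\<bar> \<le> \<bar>B\<bar>" using bounded[of x] by linarith
    from mult_left_mono[OF this abs_ge_zero[of "g x"]]
    show "norm (g x * h x) \<le> norm (B * g x)" by (simp add: abs_mult mult.commute)
  qed
qed

lemma tendsto_integral_symmetric_truncation:
  fixes f :: "real \<Rightarrow> real"
  assumes f: "integrable lborel f"
  shows "((\<lambda>M. LINT v|lborel. f v * indicator {-M..M} v) \<longlongrightarrow> (LINT v|lborel. f v)) at_top"
proof (rule integral_dominated_convergence_at_top[where w="\<lambda>v. \<bar>f v\<bar>"])
  show "f \<in> borel_measurable lborel" using f by (rule borel_measurable_integrable)
  then show "(\<lambda>v. f v * indicator {-M..M} v) \<in> borel_measurable lborel" for M
    by simp
  show "integrable lborel (\<lambda>v. \<bar>f v\<bar>)" using f by (rule integrable_abs)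
  show "AE v in lborel. ((\<lambda>M. f v * indicator {-M..M} v) \<longlongrightarrow> f v) at_top"
  proof (rule AE_I2)
    fix v
    have "\<forall>\<^sub>F M in at_top. f v * indicator {-M..M} v = f v"
      using eventually_ge_at_top[of "\<bar>v\<bar>"]
      by eventually_elim (simp add: indicator_def abs_le_iff)
    then show "((\<lambda>M. f v * indicator {-M..M} v) \<longlongrightarrow> f v) at_top"
      by (rule tendsto_eventually)
  qed
  show "\<forall>\<^sub>F M in at_top. AE v in lborel. norm (f v * indicator {-M..M} v) \<le> \<bar>f v\<bar>"
    by (simp add: indicator_def)
qed

definition cos_transform :: "(real \<Rightarrow> real) \<Rightarrow> real \<Rightarrow> real" where
  "cos_transform g \<xi> = (LINT v|lborel. g v * cos (\<xi> * v))"

lemma fourier_even: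
  assumes even: "\<And>v. g (- v) = g v" and g: "integrable lborel g"
  shows "fourier g \<xi> = of_real (cos_transform g \<xi>)"
proof -
  have g_cos: "integrable lborel (\<lambda>v. g v * cos (\<xi> * v))"
    and g_sin: "integrable lborel (\<lambda>v. g v * sin (\<xi> * v))"
    using g by (auto intro!: integrable_mult_bounded[where B=1])
  have odd_vanishes: "(LINT v|lborel. g v * sin (\<xi> * v)) = 0"
  proof -
    have "(LINT v|lborel. g v * sin (\<xi> * v))
        = \<bar>-1::real\<bar> *\<^sub>R (LINT v|lborel. g (0 + -1 * v) * sin (\<xi> * (0 + -1 * v)))"
      by (rule lborel_integral_real_affine) simp
    also have "\<dots> = - (LINT v|lborel. g v * sin (\<xi> * v))"
      by (simp add: even)
    finally show ?thesis by simp
  qed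
  have "fourier g \<xi>
      = (LINT v|lborel. of_real (g v * cos (\<xi> * v)) - \<i> * of_real (g v * sin (\<xi> * v)))"
    unfolding fourier_def by (intro Bochner_Integration.integral_cong) (auto simp: complex_eq_iff)
  also have "\<dots> = of_real (cos_transform g \<xi>) - \<i> * of_real (LINT v|lborel. g v * sin (\<xi> * v))"
    using Bochner_Integration.integral_diff[OF integrable_of_real[OF g_cos]
        integrable_mult_right[OF integrable_of_real[OF g_sin], of \<i>]]
    unfolding cos_transform_def integral_mult_right_zero integral_complex_of_real .
  finally show ?thesis by (simp add: odd_vanishes)
qed

context
  fixes g :: "real \<Rightarrow> real"
  assumes nonneg: "\<And>v. 0 \<le> g v"
    and integrable: "integrable lborel g"
    and mass: "(LINT v|lborel. g v) = 1"
begin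

lemma integrable_mult_one_minus_cos:
  "integrable lborel (\<lambda>v. g v * (1 - \<sigma> * cos (\<xi> * v)))"
  by (rule integrable_mult_bounded[OF integrable, where B="1 + \<bar>\<sigma>\<bar>"])
    (auto simp: abs_mult intro!: order_trans[OF abs_triangle_ineq4] mult_left_le)

lemma one_minus_cos_transform:
  "1 - \<sigma> * cos_transform g \<xi> = (LINT v|lborel. g v * (1 - \<sigma> * cos (\<xi> * v)))"
proof -
  have "integrable lborel (\<lambda>v. g v * cos (\<xi> * v))"
    using integrable by (auto intro!: integrable_mult_bounded[where B=1])
  then show ?thesis
    using integrable by (simp add: cos_transform_def mass right_diff_distrib mult.left_commute)
qed

lemma cos_transform_ge:
  assumes moment: "integrable lborel (\<lambda>v. g v * v\<^sup>2)"
  shows "1 - \<xi>\<^sup>2 / 2 * (LINT v|lborel. g v * v\<^sup>2) \<le> cos_transform g \<xi>"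
proof -
  have "(LINT v|lborel. g v * (1 - cos (\<xi> * v))) \<le> (LINT v|lborel. \<xi>\<^sup>2 / 2 * (g v * v\<^sup>2))"
  proof (rule integral_mono)
    show "integrable lborel (\<lambda>v. \<xi>\<^sup>2 / 2 * (g v * v\<^sup>2))" using moment by simp
    show "g v * (1 - cos (\<xi> * v)) \<le> \<xi>\<^sup>2 / 2 * (g v * v\<^sup>2)" for v
      using mult_left_mono[OF one_minus_cos_le[of "\<xi> * v"] nonneg[of v]]
      by (simp add: power_mult_distrib mult_ac)
  qed (use integrable_mult_one_minus_cos[of 1] in simp)
  then show ?thesis using one_minus_cos_transform[of 1 \<xi>] by simp
qed

lemma cos_transform_doubling:
  "1 - \<bar>cos_transform g (2 * \<xi>)\<bar> \<le> 4 * (1 - \<bar>cos_transform g \<xi>\<bar>)"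
proof -
  define \<sigma> where "\<sigma> = sgn (cos_transform g \<xi>)"
  have "\<bar>\<sigma>\<bar> \<le> 1" by (simp add: \<sigma>_def abs_sgn_eq)
  have "(LINT v|lborel. g v * (1 - cos (2 * \<xi> * v)))
      \<le> (LINT v|lborel. 4 * (g v * (1 - \<sigma> * cos (\<xi> * v))))"
  proof (rule integral_mono)
    show "integrable lborel (\<lambda>v. 4 * (g v * (1 - \<sigma> * cos (\<xi> * v))))"
      using integrable_mult_one_minus_cos by simp
    show "g v * (1 - cos (2 * \<xi> * v)) \<le> 4 * (g v * (1 - \<sigma> * cos (\<xi> * v)))" for v
      using mult_left_mono[OF one_minus_cos_double_le[OF \<open>\<bar>\<sigma>\<bar> \<le> 1\<close>, of "\<xi> * v"] nonneg[of v]]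
      by (simp add: mult_ac)
  qed (use integrable_mult_one_minus_cos[of 1] in simp)
  then have "1 - cos_transform g (2 * \<xi>) \<le> 4 * (1 - \<bar>cos_transform g \<xi>\<bar>)"
    using one_minus_cos_transform[of 1 "2 * \<xi>"] one_minus_cos_transform[of \<sigma> \<xi>]
    by (simp add: \<sigma>_def abs_sgn mult.commute)
  then show ?thesis by linarith
qed

lemma cos_transform_gap_near_zero:
  assumes moment: "integrable lborel (\<lambda>v. g v * v\<^sup>2)"
    and c: "c < (LINT v|lborel. g v * v\<^sup>2)"
  shows "\<exists>\<delta>>0. \<forall>\<xi>. \<bar>\<xi>\<bar> \<le> \<delta> \<longrightarrow> c / 3 * \<xi>\<^sup>2 \<le> 1 - cos_transform g \<xi>"
proof -
  have "\<forall>\<^sub>F M in at_top. 1 \<le> M \<and> c < (LINT v|lborel. g v * v\<^sup>2 * indicator {-M..M} v)"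
    using eventually_ge_at_top order_tendstoD(1)[OF tendsto_integral_symmetric_truncation[OF moment] c]
    by (rule eventually_conj)
  then obtain M where M: "1 \<le> M" "c < (LINT v|lborel. g v * v\<^sup>2 * indicator {-M..M} v)"
    by (auto simp: eventually_at_top_linorder)
  have "c / 3 * \<xi>\<^sup>2 \<le> 1 - cos_transform g \<xi>" if \<xi>: "\<bar>\<xi>\<bar> \<le> 1 / M" for \<xi>
  proof -
    have "c / 3 * \<xi>\<^sup>2 \<le> \<xi>\<^sup>2 / 3 * (LINT v|lborel. g v * v\<^sup>2 * indicator {-M..M} v)"
      using mult_right_mono[OF less_imp_le[OF M(2)], of "\<xi>\<^sup>2 / 3"] by (simp add: mult_ac)
    also have "\<dots> = (LINT v|lborel. \<xi>\<^sup>2 / 3 * (g v * v\<^sup>2 * indicator {-M..M} v))"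
      by simp
    also have "\<dots> \<le> (LINT v|lborel. g v * (1 - cos (\<xi> * v)))"
    proof (rule integral_mono)
      show "integrable lborel (\<lambda>v. \<xi>\<^sup>2 / 3 * (g v * v\<^sup>2 * indicator {-M..M} v))"
        using moment by (simp add: integrable_real_mult_indicator)
      fix v
      show "\<xi>\<^sup>2 / 3 * (g v * v\<^sup>2 * indicator {-M..M} v) \<le> g v * (1 - cos (\<xi> * v))"
      proof (cases "v \<in> {-M..M}")
        case True
        then have "\<bar>v\<bar> \<le> M" by auto
        have "\<bar>\<xi>\<bar> * \<bar>v\<bar> \<le> 1 / M * M"
          using \<xi> \<open>\<bar>v\<bar> \<le> M\<close> by (intro mult_mono) auto
        then have "\<bar>\<xi> * v\<bar> \<le> 1" using M(1) by (simp add: abs_mult)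
        from mult_left_mono[OF one_minus_cos_ge[OF this] nonneg[of v]] True show ?thesis
          by (simp add: power_mult_distrib mult_ac)
      next
        case False
        then show ?thesis using nonneg[of v] by simp
      qed
    qed (use integrable_mult_one_minus_cos[of 1] in simp)
    finally show ?thesis using one_minus_cos_transform[of 1 \<xi>] by simp
  qed
  then show ?thesis using M(1) by (intro exI[of _ "1 / M"]) auto
qed

lemma abs_cos_transform_gap_near_zero:
  assumes moment: "integrable lborel (\<lambda>v. g v * v\<^sup>2)"
    and variance: "(LINT v|lborel. g v * v\<^sup>2) = 1"
  shows "\<exists>\<delta>>0. \<forall>\<xi>. \<bar>\<xi>\<bar> \<le> \<delta> \<longrightarrow> 1 / 4 * \<xi>\<^sup>2 \<le> 1 - \<bar>cos_transform g \<xi>\<bar>"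
proof -
  obtain \<delta> where "0 < \<delta>" and gap: "\<And>\<xi>. \<bar>\<xi>\<bar> \<le> \<delta> \<Longrightarrow> 3 / 4 / 3 * \<xi>\<^sup>2 \<le> 1 - cos_transform g \<xi>"
    using cos_transform_gap_near_zero[OF moment, of "3 / 4"] variance by auto
  have "1 / 4 * \<xi>\<^sup>2 \<le> 1 - \<bar>cos_transform g \<xi>\<bar>" if "\<bar>\<xi>\<bar> \<le> min \<delta> 1" for \<xi>
  proof -
    have "\<xi>\<^sup>2 \<le> 1" using that by (simp add: abs_square_le_1)
    then have "0 \<le> cos_transform g \<xi>" using cos_transform_ge[OF moment, of \<xi>] variance by simp
    then show ?thesis using gap[of \<xi>] that by simp
  qed
  then show ?thesis using \<open>0 < \<delta>\<close> by (intro exI[of _ "min \<delta> 1"]) auto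
qed

end

lemma doubling_lower_bound:
  fixes u :: "real \<Rightarrow> real"
  assumes doubling: "\<And>\<xi>. u (2 * \<xi>) \<le> 4 * u \<xi>" and far: "\<And>\<xi>. \<eta> \<le> \<bar>\<xi>\<bar> \<Longrightarrow> b \<le> u \<xi>"
  shows "\<eta> / 2 ^ k \<le> \<bar>\<xi>\<bar> \<Longrightarrow> b / 4 ^ k \<le> u \<xi>"
proof (induction k arbitrary: \<xi>)
  case 0
  then show ?case using far by simp
next
  case (Suc k)
  have "\<eta> / 2 ^ k \<le> \<bar>2 * \<xi>\<bar>" using Suc.prems by (simp add: field_simps abs_mult)
  then have "b / 4 ^ k \<le> u (2 * \<xi>)" by (rule Suc.IH)
  also have "\<dots> \<le> 4 * u \<xi>" by (rule doubling)
  finally show ?case by (simp add: field_simps)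
qed

lemma quadratic_lower_bound_on_bounded:
  fixes u :: "real \<Rightarrow> real"
  assumes doubling: "\<And>\<xi>. u (2 * \<xi>) \<le> 4 * u \<xi>"
    and near: "0 < \<delta>" "\<And>\<xi>. \<bar>\<xi>\<bar> \<le> \<delta> \<Longrightarrow> a * \<xi>\<^sup>2 \<le> u \<xi>"
    and far: "\<And>\<xi>. \<eta> \<le> \<bar>\<xi>\<bar> \<Longrightarrow> b \<le> u \<xi>"
    and pos: "0 < a" "0 < b" "0 < R"
  shows "\<exists>c>0. \<forall>\<xi>. \<bar>\<xi>\<bar> < R \<longrightarrow> c * \<xi>\<^sup>2 \<le> u \<xi>"
proof -
  obtain m :: nat where "\<eta> / \<delta> < 2 ^ m" using real_arch_pow[of 2 "\<eta> / \<delta>"] by auto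
  then have m: "\<eta> / 2 ^ m < \<delta>" using near(1) by (simp add: field_simps)
  define c where "c = min a (b / 4 ^ m / R\<^sup>2)"
  have "c * \<xi>\<^sup>2 \<le> u \<xi>" if \<xi>: "\<bar>\<xi>\<bar> < R" for \<xi>
  proof (cases "\<bar>\<xi>\<bar> \<le> \<delta>")
    case True
    have "c * \<xi>\<^sup>2 \<le> a * \<xi>\<^sup>2" by (intro mult_right_mono) (simp_all add: c_def)
    also have "\<dots> \<le> u \<xi>" using True by (rule near(2))
    finally show ?thesis .
  next
    case False
    have "\<xi>\<^sup>2 \<le> R\<^sup>2" using abs_le_square_iff[of \<xi> R] \<xi> pos(3) by simp
    then have "c * \<xi>\<^sup>2 \<le> b / 4 ^ m / R\<^sup>2 * R\<^sup>2"
      using pos by (intro mult_mono) (auto simp: c_def)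
    also have "\<dots> = b / 4 ^ m" using pos by simp
    also have "\<dots> \<le> u \<xi>" using doubling_lower_bound[of u, OF doubling far] False m by simp
    finally show ?thesis .
  qed
  moreover have "0 < c" using pos by (simp add: c_def)
  ultimately show ?thesis by blast
qed

lemma exp_powr_absorbs_constant:
  fixes K1 K2 s :: real
  assumes "1 / 2 < K1" "0 < K2" "0 < s"
  shows "\<exists>\<eta>>0. \<forall>t\<ge>\<eta>. K1 * exp (- K2 * t powr s) \<le> exp (- (K2 / 2) * t powr s) / 2"
proof -
  define B where "B = 2 * ln (2 * K1) / K2"
  have "0 < B" using assms by (simp add: B_def)
  have "K1 * exp (- K2 * t powr s) \<le> exp (- (K2 / 2) * t powr s) / 2" if t: "B powr (1 / s) \<le> t" for t
  proof -
    have "B = (B powr (1 / s)) powr s" using \<open>0 < B\<close> assms by (simp add: powr_powr)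
    also have "\<dots> \<le> t powr s" using t \<open>0 < B\<close> assms by (intro powr_mono2) auto
    finally have "ln (2 * K1) \<le> K2 / 2 * t powr s" using assms by (simp add: B_def field_simps)
    let ?e = "exp (- (K2 / 2) * t powr s)"
    have "2 * K1 = exp (ln (2 * K1))" using assms by simp
    also have "\<dots> \<le> exp (K2 / 2 * t powr s)" using \<open>ln (2 * K1) \<le> _\<close> by simp
    finally have "2 * K1 * ?e \<le> 1" by (simp add: exp_minus field_simps)
    from mult_right_mono[OF this, of "?e / 2"] show ?thesis
      by (simp add: field_simps flip: exp_add)
  qed
  then show ?thesis using \<open>0 < B\<close> by (intro exI[of _ "B powr (1 / s)"]) auto
qed

lemma two_regime_bound:
  fixes \<phi> :: "real \<Rightarrow> real"
  assumes doubling: "\<And>\<xi>. 1 - \<bar>\<phi> (2 * \<xi>)\<bar> \<le> 4 * (1 - \<bar>\<phi> \<xi>\<bar>)"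
    and near: "0 < \<delta>" "0 < a" "\<And>\<xi>. \<bar>\<xi>\<bar> \<le> \<delta> \<Longrightarrow> a * \<xi>\<^sup>2 \<le> 1 - \<bar>\<phi> \<xi>\<bar>"
    and far: "\<And>\<xi>. \<eta> \<le> \<bar>\<xi>\<bar> \<Longrightarrow> \<bar>\<phi> \<xi>\<bar> \<le> exp (- L * \<bar>\<xi>\<bar> powr s) / 2"
    and "0 < L" "0 < R" "\<eta> \<le> R"
  shows "\<exists>K>0. (\<forall>\<xi>. \<bar>\<xi>\<bar> < R \<longrightarrow> \<bar>\<phi> \<xi>\<bar> \<le> exp (- K * \<xi>\<^sup>2)) \<and>
                (\<forall>\<xi>. R \<le> \<bar>\<xi>\<bar> \<longrightarrow> \<bar>\<phi> \<xi>\<bar> \<le> exp (- K * \<bar>\<xi>\<bar> powr s))"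
proof -
  have half: "1 / 2 \<le> 1 - \<bar>\<phi> \<xi>\<bar>" if "\<eta> \<le> \<bar>\<xi>\<bar>" for \<xi>
  proof -
    have "exp (- L * \<bar>\<xi>\<bar> powr s) \<le> 1" using \<open>0 < L\<close> by simp
    then show ?thesis using far[OF that] by linarith
  qed
  obtain c where "0 < c" and c: "\<And>\<xi>. \<bar>\<xi>\<bar> < R \<Longrightarrow> c * \<xi>\<^sup>2 \<le> 1 - \<bar>\<phi> \<xi>\<bar>"
    using quadratic_lower_bound_on_bounded[of "\<lambda>\<xi>. 1 - \<bar>\<phi> \<xi>\<bar>",
        OF doubling near(1,3) half near(2) _ \<open>0 < R\<close>] by auto
  define K where "K = min c L"
  have "\<bar>\<phi> \<xi>\<bar> \<le> exp (- K * \<xi>\<^sup>2)" if "\<bar>\<xi>\<bar> < R" for \<xi>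
  proof -
    have "\<bar>\<phi> \<xi>\<bar> \<le> exp (- (1 - \<bar>\<phi> \<xi>\<bar>))" using exp_ge_add_one_self[of "\<bar>\<phi> \<xi>\<bar> - 1"] by simp
    also have "\<dots> \<le> exp (- K * \<xi>\<^sup>2)"
      using c[OF that] mult_right_mono[of K c "\<xi>\<^sup>2"] by (simp add: K_def)
    finally show ?thesis .
  qed
  moreover have "\<bar>\<phi> \<xi>\<bar> \<le> exp (- K * \<bar>\<xi>\<bar> powr s)" if "R \<le> \<bar>\<xi>\<bar>" for \<xi>
  proof -
    have "\<bar>\<phi> \<xi>\<bar> \<le> exp (- L * \<bar>\<xi>\<bar> powr s)" using far[of \<xi>] that \<open>\<eta> \<le> R\<close> by simp
    also have "\<dots> \<le> exp (- K * \<bar>\<xi>\<bar> powr s)" by (simp add: K_def mult_right_mono)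
    finally show ?thesis .
  qed
  ultimately show ?thesis using \<open>0 < c\<close> \<open>0 < L\<close> by (intro exI[of _ K]) (auto simp: K_def)
qed

theorem proposition7:
  fixes g :: "real \<Rightarrow> real" and s K1 K2 :: real
  assumes nonneg: "\<And>v. g v \<ge> 0"
    and even: "\<And>v. g (- v) = g v"
    and int1: "integrable lborel g"
    and mass: "(LINT v|lborel. g v) = 1"
    and int2: "integrable lborel (\<lambda>v. g v * v\<^sup>2)"
    and var: "(LINT v|lborel. g v * v\<^sup>2) = 1"
    and s: "0 < s" "s \<le> 2"
    and K1: "K1 > 1" and K2: "K2 > 0"
    and decay: "\<And>\<xi>. cmod (fourier g \<xi>) \<le> K1 * exp (- K2 * \<bar>\<xi>\<bar> powr s)"
  shows "\<exists>\<eta>>0. \<forall>R>\<eta>. \<exists>K>0.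
           (\<forall>\<xi>. \<bar>\<xi>\<bar> < R \<longrightarrow> cmod (fourier g \<xi>) \<le> exp (- K * \<bar>\<xi>\<bar>\<^sup>2)) \<and>
           (\<forall>\<xi>. \<bar>\<xi>\<bar> \<ge> R \<longrightarrow> cmod (fourier g \<xi>) \<le> exp (- K * \<bar>\<xi>\<bar> powr s))"
proof -
  define \<phi> where "\<phi> = cos_transform g"
  have fourier: "cmod (fourier g \<xi>) = \<bar>\<phi> \<xi>\<bar>" for \<xi>
    using fourier_even[OF even int1] by (simp add: \<phi>_def)
  have doubling: "1 - \<bar>\<phi> (2 * \<xi>)\<bar> \<le> 4 * (1 - \<bar>\<phi> \<xi>\<bar>)" for \<xi>
    unfolding \<phi>_def using nonneg int1 mass by (rule cos_transform_doubling)
  obtain \<delta> where "0 < \<delta>" and near: "\<And>\<xi>. \<bar>\<xi>\<bar> \<le> \<delta> \<Longrightarrow> 1 / 4 * \<xi>\<^sup>2 \<le> 1 - \<bar>\<phi> \<xi>\<bar>"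
    using abs_cos_transform_gap_near_zero[OF nonneg int1 mass int2 var] by (auto simp: \<phi>_def)
  obtain \<eta> where "0 < \<eta>" and \<eta>: "\<And>t. \<eta> \<le> t \<Longrightarrow> K1 * exp (- K2 * t powr s) \<le> exp (- (K2 / 2) * t powr s) / 2"
    using exp_powr_absorbs_constant[of K1 K2 s] K1 K2 s by auto
  have far: "\<bar>\<phi> \<xi>\<bar> \<le> exp (- (K2 / 2) * \<bar>\<xi>\<bar> powr s) / 2" if "\<eta> \<le> \<bar>\<xi>\<bar>" for \<xi>
    using decay[of \<xi>] \<eta>[OF that] by (simp add: fourier)
  show ?thesis
  proof (rule exI[of _ \<eta>], intro conjI allI impI \<open>0 < \<eta>\<close>)
    fix R assume "\<eta> < R"
    with two_regime_bound[where a="1 / 4" and L="K2 / 2", OF doubling _ _ near far]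
      \<open>0 < \<delta>\<close> \<open>0 < \<eta>\<close> K2
    show "\<exists>K>0. (\<forall>\<xi>. \<bar>\<xi>\<bar> < R \<longrightarrow> cmod (fourier g \<xi>) \<le> exp (- K * \<bar>\<xi>\<bar>\<^sup>2)) \<and>
           (\<forall>\<xi>. \<bar>\<xi>\<bar> \<ge> R \<longrightarrow> cmod (fourier g \<xi>) \<le> exp (- K * \<bar>\<xi>\<bar> powr s))"
      by (simp add: fourier)
  qed
qed

end
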